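(* Let $\mathcal H$ be a complex Hilbert space, let $\mathbf A=(A_1,\dots,A_m)$ be an $m$-tuple of bounded self-adjoint operators on $\mathcal H$, and let $k$ be a positive integer. If $\Lambda_{\hat k}(\mathbf A)\neq\emptyset$ for some integer $\hat k\ge (m+2)k$, then $\Lambda_k(\mathbf A)$ is star-shaped and contains the convex set $\operatorname{conv}\Lambda_{\hat k}(\mathbf A)$, and every element of $\operatorname{conv}\Lambda_{\hat k}(\mathbf A)$ is a star center of $\Lambda_k(\mathbf A)$.
   Context: For an $m$-tuple $\mathbf A=(A_1,\dots,A_m)$ of bounded self-adjoint operators on a complex Hilbert space $\mathcal H$ and a positive integer $k$, the joint rank-$k$ numerical range is $\Lambda_k(\mathbf A)=\{(a_1,\dots,a_m)\in\mathbb R^m:$ there is an orthogonal projection $P$ of rank $k$ on $\mathcal H$ with $PA_jP=a_jP$ for $j=1,\dots,m\}$. A set $S\subseteq\mathbb R^m$ is star-shaped with star center $\mathbf c\in S$ if for every $\mathbf b\in S$ the line segment joining $\mathbf c$ and $\mathbf b$ lies in $S$. $\operatorname{conv}$ denotes convex hull. *)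

theory Defs
  imports "HOL-Analysis.Analysis"
begin

class complex_vector = real_vector +
  fixes scaleC :: "complex \<Rightarrow> 'a \<Rightarrow> 'a" (infixr \<open>*\<^sub>C\<close> 75)
  assumes scaleC_add_right: "a *\<^sub>C (x + y) = a *\<^sub>C x + a *\<^sub>C y"
    and scaleC_add_left: "(a + b) *\<^sub>C x = a *\<^sub>C x + b *\<^sub>C x"
    and scaleC_scaleC: "a *\<^sub>C (b *\<^sub>C x) = (a * b) *\<^sub>C x"
    and scaleC_one: "1 *\<^sub>C x = x"
    and scaleR_scaleC: "scaleR r x = complex_of_real r *\<^sub>C x"

class complex_inner = complex_vector + real_normed_vector +
  fixes cinner :: "'a \<Rightarrow> 'a \<Rightarrow> complex"
  assumes cinner_commute: "cinner x y = cnj (cinner y x)"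
    and cinner_add_left: "cinner (x + y) z = cinner x z + cinner y z"
    and cinner_scaleC_left: "cinner (r *\<^sub>C x) y = cnj r * cinner x y"
    and cinner_real: "Im (cinner x x) = 0"
    and cinner_ge_zero: "0 \<le> Re (cinner x x)"
    and cinner_eq_zero_iff: "cinner x x = 0 \<longleftrightarrow> x = 0"
    and norm_eq_sqrt_cinner: "norm x = sqrt (Re (cinner x x))"

class chilbert_space = complex_inner + complete_space

definition clinear :: "('a::complex_vector \<Rightarrow> 'b::complex_vector) \<Rightarrow> bool" where
  "clinear f \<longleftrightarrow> (\<forall>x y. f (x + y) = f x + f y) \<and> (\<forall>c x. f (c *\<^sub>C x) = c *\<^sub>C f x)"

definition bounded_operator :: "('a::complex_inner \<Rightarrow> 'a) \<Rightarrow> bool" where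
  "bounded_operator T \<longleftrightarrow> clinear T \<and> (\<exists>K. \<forall>x. norm (T x) \<le> K * norm x)"

definition selfadjoint :: "('a::complex_inner \<Rightarrow> 'a) \<Rightarrow> bool" where
  "selfadjoint T \<longleftrightarrow> bounded_operator T \<and> (\<forall>x y. cinner (T x) y = cinner x (T y))"

definition orth_projection :: "('a::complex_inner \<Rightarrow> 'a) \<Rightarrow> bool" where
  "orth_projection P \<longleftrightarrow> selfadjoint P \<and> P \<circ> P = P"

definition cspan :: "'a::complex_vector set \<Rightarrow> 'a set" where
  "cspan S = {\<Sum>v\<in>T. c v *\<^sub>C v | T c. finite T \<and> T \<subseteq> S}"

definition cindependent :: "'a::complex_vector set \<Rightarrow> bool" where
  "cindependent S \<longleftrightarrow> \<not> (\<exists>T c. finite T \<and> T \<subseteq> S \<and> (\<Sum>v\<in>T. c v *\<^sub>C v) = 0 \<and> (\<exists>v\<in>T. c v \<noteq> 0))"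

definition has_rank :: "('a::complex_vector \<Rightarrow> 'a) \<Rightarrow> nat \<Rightarrow> bool" where
  "has_rank P k \<longleftrightarrow> (\<exists>B. finite B \<and> card B = k \<and> cindependent B \<and> cspan B = range P)"

text \<open>An m-tuple of operators is a family indexed by a finite type 'i with CARD('i) = m;
  points of R^m are elements of real^'i.\<close>
definition joint_rank_k_numrange ::
  "('i::finite \<Rightarrow> 'a::complex_inner \<Rightarrow> 'a) \<Rightarrow> nat \<Rightarrow> (real^'i) set" where
  "joint_rank_k_numrange A k =
     {a. \<exists>P. orth_projection P \<and> has_rank P k \<and>
             (\<forall>j. P \<circ> A j \<circ> P = (\<lambda>x. complex_of_real (a $ j) *\<^sub>C P x))}"

definition star_center :: "'v::real_vector \<Rightarrow> 'v set \<Rightarrow> bool" where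
  "star_center c S \<longleftrightarrow> c \<in> S \<and> (\<forall>b\<in>S. closed_segment c b \<subseteq> S)"

end

theory Submission
  imports Defs
begin

text \<open>Given \<open>a\<close> with a subspace \<open>V\<close> of
  dimension \<open>khat \<ge> (m + 2) k\<close> and \<open>b\<close> with an orthonormal \<open>k\<close>-frame \<open>w\<close>, the at most \<open>(m + 1) k\<close>
  vectors \<open>w i\<close> and \<open>A j (w i)\<close> impose so few linear constraints that \<open>V\<close> still contains an
  orthonormal \<open>k\<close>-frame \<open>u\<close> orthogonal to all of them. Then \<open>\<surd>t u + \<surd>(1 - t) w\<close> is an
  orthonormal frame on which every \<open>A j\<close> compresses to \<open>t a + (1 - t) b\<close>, so each point of the
  rank-\<open>khat\<close> range is a star center of the rank-\<open>k\<close> range. Star centers of any set form a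
  convex set, which gives the statement about the convex hull.\<close>

interpretation cv: vector_space "scaleC :: complex \<Rightarrow> 'a::complex_vector \<Rightarrow> 'a"
  by unfold_locales (simp_all add: scaleC_add_right scaleC_add_left scaleC_scaleC scaleC_one)

lemma cspan_eq_span: "cspan S = cv.span S"
  by (simp add: cspan_def cv.span_explicit)

lemma cindependent_eq_independent: "cindependent S \<longleftrightarrow> cv.independent S"
  by (simp add: cindependent_def cv.dependent_explicit)

lemma cinner_zero_left [simp]: "cinner 0 (y::'a::complex_inner) = 0"
  using cinner_add_left[of 0 0 y] by simp

lemma cinner_zero_right [simp]: "cinner (y::'a::complex_inner) 0 = 0"
  by (subst cinner_commute) simp

lemma cinner_add_right: "cinner (z::'a::complex_inner) (x + y) = cinner z x + cinner z y"
  by (subst (1 2 3) cinner_commute) (simp add: cinner_add_left)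

lemma cinner_scaleC_right: "cinner (x::'a::complex_inner) (r *\<^sub>C y) = r * cinner x y"
  by (subst (1 2) cinner_commute) (simp add: cinner_scaleC_left)

lemma cinner_sum_left: "cinner (\<Sum>i\<in>I. f i) (y::'a::complex_inner) = (\<Sum>i\<in>I. cinner (f i) y)"
  by (induct I rule: infinite_finite_induct) (simp_all add: cinner_add_left)

lemma cinner_sum_right: "cinner (y::'a::complex_inner) (\<Sum>i\<in>I. f i) = (\<Sum>i\<in>I. cinner y (f i))"
  by (induct I rule: infinite_finite_induct) (simp_all add: cinner_add_right)

lemma cinner_diff_right: "cinner (z::'a::complex_inner) (x - y) = cinner z x - cinner z y"
  using cinner_add_right[of z "x - y" y] by simp

lemma cinner_diff_left: "cinner (x - y) (z::'a::complex_inner) = cinner x z - cinner y z"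
  by (subst (1 2 3) cinner_commute) (simp add: cinner_diff_right)

lemma cinner_self_eq_norm_square: "cinner (x::'a::complex_inner) x = complex_of_real ((norm x)\<^sup>2)"
  using cinner_real[of x] by (simp add: norm_eq_sqrt_cinner cinner_ge_zero complex_eq_iff)

lemma norm_scaleC: "norm (c *\<^sub>C (x::'a::complex_inner)) = cmod c * norm x"
proof -
  have "complex_of_real ((norm (c *\<^sub>C x))\<^sup>2) = cnj c * c * cinner x x"
    unfolding cinner_self_eq_norm_square[symmetric] by (simp add: cinner_scaleC_left cinner_scaleC_right)
  also have "cnj c * c = complex_of_real ((cmod c)\<^sup>2)"
    by (metis complex_norm_square mult.commute)
  also have "\<dots> * cinner x x = complex_of_real ((cmod c * norm x)\<^sup>2)"
    by (simp add: cinner_self_eq_norm_square power_mult_distrib)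
  finally show ?thesis by (simp only: of_real_eq_iff power2_eq_iff_nonneg norm_ge_zero
        zero_le_mult_iff) simp
qed

lemma cmod_cinner_unit_le_norm:
  fixes e y :: "'a::complex_inner"
  assumes "cinner e e = 1"
  shows "cmod (cinner e y) \<le> norm y"
proof -
  define c where "c = cinner e y"
  have "cinner (y - c *\<^sub>C e) (y - c *\<^sub>C e) = cinner y y - complex_of_real ((cmod c)\<^sup>2)"
    unfolding cinner_diff_left cinner_diff_right cinner_scaleC_left cinner_scaleC_right assms
      cinner_commute[of y e] complex_norm_square
    by (simp add: c_def algebra_simps)
  then have "(cmod c)\<^sup>2 \<le> (norm y)\<^sup>2"
    using cinner_ge_zero[of "y - c *\<^sub>C e"] by (simp add: cinner_self_eq_norm_square)
  then show ?thesis unfolding c_def by (simp add: power2_le_iff_abs_le)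
qed

lemma clinear_add: "clinear f \<Longrightarrow> f (x + y) = f x + f y"
  by (simp add: clinear_def)

lemma clinear_scaleC: "clinear f \<Longrightarrow> f (c *\<^sub>C x) = c *\<^sub>C f x"
  by (simp add: clinear_def)

lemma clinear_zero: "clinear f \<Longrightarrow> f 0 = 0"
  using clinear_scaleC[of f 0 0] by simp

lemma clinear_sum: "clinear f \<Longrightarrow> f (\<Sum>i\<in>I. g i) = (\<Sum>i\<in>I. f (g i))"
  by (induct I rule: infinite_finite_induct) (simp_all add: clinear_zero clinear_add)

lemma subspace_range_clinear: "clinear f \<Longrightarrow> cv.subspace (range f)"
  unfolding cv.subspace_def
  by (metis (no_types, lifting) clinear_add clinear_scaleC clinear_zero rangeE rangeI)

lemma selfadjoint_clinear: "selfadjoint T \<Longrightarrow> clinear T"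
  by (simp add: selfadjoint_def bounded_operator_def)

lemma selfadjoint_cinner: "selfadjoint T \<Longrightarrow> cinner (T x) y = cinner x (T y)"
  by (simp add: selfadjoint_def)

definition orthonormal :: "(nat \<Rightarrow> 'a::complex_inner) \<Rightarrow> nat \<Rightarrow> bool" where
  "orthonormal x k \<longleftrightarrow> (\<forall>i<k. \<forall>l<k. cinner (x i) (x l) = (if i = l then 1 else 0))"

definition orthonormal_proj :: "(nat \<Rightarrow> 'a::complex_inner) \<Rightarrow> nat \<Rightarrow> 'a \<Rightarrow> 'a" where
  "orthonormal_proj x k y = (\<Sum>i<k. cinner (x i) y *\<^sub>C x i)"

lemma clinear_orthonormal_proj: "clinear (orthonormal_proj x k)"
  unfolding clinear_def orthonormal_proj_def
  by (simp add: cinner_add_right cinner_scaleC_right scaleC_add_left sum.distrib cv.scale_sum_right)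

lemma cinner_orthonormal_proj:
  assumes "orthonormal x k" "l < k"
  shows "cinner (x l) (orthonormal_proj x k y) = cinner (x l) y"
proof -
  have "cinner (x l) (orthonormal_proj x k y) = (\<Sum>i<k. if i = l then cinner (x i) y else 0)"
    unfolding orthonormal_proj_def cinner_sum_right cinner_scaleC_right
    using assms unfolding orthonormal_def by (intro sum.cong) auto
  then show ?thesis using assms(2) by (simp add: sum.delta')
qed

lemma orthonormal_proj_idem:
  assumes "orthonormal x k"
  shows "orthonormal_proj x k (orthonormal_proj x k y) = orthonormal_proj x k y"
  unfolding orthonormal_proj_def[of x k "orthonormal_proj x k y"]
  using cinner_orthonormal_proj[OF assms] by (simp add: orthonormal_proj_def)

lemma orthonormal_proj_fixes:
  assumes "orthonormal x k" "l < k"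
  shows "orthonormal_proj x k (x l) = x l"
proof -
  have "orthonormal_proj x k (x l) = (\<Sum>i<k. if i = l then x i else 0)"
    unfolding orthonormal_proj_def using assms unfolding orthonormal_def by (intro sum.cong) auto
  then show ?thesis using assms(2) by (simp add: sum.delta')
qed

lemma norm_orthonormal_proj_le:
  assumes "orthonormal x k"
  shows "norm (orthonormal_proj x k y) \<le> real k * norm y"
proof -
  have "norm (orthonormal_proj x k y) \<le> (\<Sum>i<k. norm (cinner (x i) y *\<^sub>C x i))"
    unfolding orthonormal_proj_def by (rule norm_sum)
  also have "\<dots> \<le> (\<Sum>i<k. norm y)"
  proof (rule sum_mono)
    fix i assume "i \<in> {..<k}"
    then have "cinner (x i) (x i) = 1" using assms unfolding orthonormal_def by auto
    moreover from this have "norm (x i) = 1" by (simp add: norm_eq_sqrt_cinner)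
    ultimately show "norm (cinner (x i) y *\<^sub>C x i) \<le> norm y"
      by (simp add: norm_scaleC cmod_cinner_unit_le_norm)
  qed
  finally show ?thesis by simp
qed

lemma cinner_orthonormal_proj_commute:
  "cinner (orthonormal_proj x k y) z = cinner y (orthonormal_proj x k z)"
  unfolding orthonormal_proj_def cinner_sum_left cinner_sum_right cinner_scaleC_left
    cinner_scaleC_right
  by (intro sum.cong refl) (simp add: cinner_commute[of y] mult.commute)

lemma orth_projection_orthonormal_proj:
  "orthonormal x k \<Longrightarrow> orth_projection (orthonormal_proj x k)"
  unfolding orth_projection_def selfadjoint_def bounded_operator_def
  using clinear_orthonormal_proj norm_orthonormal_proj_le cinner_orthonormal_proj_commute
    orthonormal_proj_idem
  by fastforce

lemma orthonormal_inj_on: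
  assumes "orthonormal x k"
  shows "inj_on x {..<k}"
proof (rule inj_onI, rule ccontr)
  fix i l assume "i \<in> {..<k}" "l \<in> {..<k}" "x i = x l" "i \<noteq> l"
  then show False using assms unfolding orthonormal_def by (metis lessThan_iff zero_neq_one)
qed

lemma cinner_orthonormal_image:
  assumes "orthonormal x k" "v \<in> x ` {..<k}" "w \<in> x ` {..<k}"
  shows "cinner v w = (if v = w then 1 else 0)"
proof -
  obtain i l where "i < k" "l < k" "v = x i" "w = x l" using assms(2,3) by auto
  moreover from this have "x i = x l \<Longrightarrow> i = l"
    using inj_onD[OF orthonormal_inj_on[OF assms(1)]] by auto
  ultimately show ?thesis using assms(1) unfolding orthonormal_def by auto
qed

lemma orthonormal_independent:
  assumes "orthonormal x k"
  shows "cv.independent (x ` {..<k})"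
  unfolding cv.dependent_explicit
proof
  assume "\<exists>T u. finite T \<and> T \<subseteq> x ` {..<k} \<and> (\<Sum>v\<in>T. u v *\<^sub>C v) = 0 \<and> (\<exists>v\<in>T. u v \<noteq> 0)"
  then obtain T u v0
    where T: "finite T" "T \<subseteq> x ` {..<k}" "(\<Sum>v\<in>T. u v *\<^sub>C v) = 0" "v0 \<in> T" "u v0 \<noteq> 0"
    by blast
  have "0 = cinner v0 (\<Sum>v\<in>T. u v *\<^sub>C v)" using T(3) by simp
  also have "\<dots> = (\<Sum>v\<in>T. if v = v0 then u v else 0)"
    unfolding cinner_sum_right cinner_scaleC_right
    by (intro sum.cong)
      (auto simp: cinner_orthonormal_image[OF assms subsetD[OF T(2) T(4)] subsetD[OF T(2)]])
  also have "\<dots> = u v0" using T by (simp add: sum.delta')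
  finally show False using T(5) by simp
qed

lemma range_orthonormal_proj:
  assumes "orthonormal x k"
  shows "range (orthonormal_proj x k) = cv.span (x ` {..<k})"
proof
  show "range (orthonormal_proj x k) \<subseteq> cv.span (x ` {..<k})"
    unfolding orthonormal_proj_def
    by (auto intro!: cv.span_sum cv.span_scale intro: cv.span_base)
  show "cv.span (x ` {..<k}) \<subseteq> range (orthonormal_proj x k)"
    by (rule cv.span_minimal)
      (auto intro!: subspace_range_clinear clinear_orthonormal_proj
        orthonormal_proj_fixes[OF assms, symmetric])
qed

lemma has_rank_orthonormal_proj:
  assumes "orthonormal x k"
  shows "has_rank (orthonormal_proj x k) k"
  unfolding has_rank_def cspan_eq_span cindependent_eq_independent
  using range_orthonormal_proj[OF assms] orthonormal_independent[OF assms]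
    card_image[OF orthonormal_inj_on[OF assms]]
  by (intro exI[of _ "x ` {..<k}"]) simp

lemma joint_rank_k_numrange_orthonormalI:
  fixes A :: "'i::finite \<Rightarrow> 'a::complex_inner \<Rightarrow> 'a"
  assumes lin: "\<And>j. clinear (A j)" and x: "orthonormal x k"
    and compr: "\<And>j i l. i < k \<Longrightarrow> l < k \<Longrightarrow>
       cinner (x i) (A j (x l)) = (if i = l then complex_of_real (a $ j) else 0)"
  shows "a \<in> joint_rank_k_numrange A k"
proof -
  let ?P = "orthonormal_proj x k"
  have "?P (A j (?P y)) = complex_of_real (a $ j) *\<^sub>C ?P y" for j y
  proof -
    have "cinner (x i) (A j (?P y)) = complex_of_real (a $ j) * cinner (x i) y" if "i < k" for i
    proof -
      have "cinner (x i) (A j (?P y)) = (\<Sum>l<k. cinner (x l) y * cinner (x i) (A j (x l)))"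
        unfolding orthonormal_proj_def clinear_sum[OF lin] clinear_scaleC[OF lin]
          cinner_sum_right cinner_scaleC_right ..
      also have "\<dots> = (\<Sum>l<k. if l = i then complex_of_real (a $ j) * cinner (x i) y else 0)"
        using compr that by (intro sum.cong) auto
      finally show ?thesis using that by (simp add: sum.delta')
    qed
    then show ?thesis
      unfolding orthonormal_proj_def[of x k "A j _"]
      by (simp add: orthonormal_proj_def cv.scale_sum_right scaleC_scaleC)
  qed
  then show ?thesis
    unfolding joint_rank_k_numrange_def
    using orth_projection_orthonormal_proj[OF x] has_rank_orthonormal_proj[OF x] by fastforce
qed

lemma joint_rank_k_numrange_compressionE:
  fixes A :: "'i::finite \<Rightarrow> 'a::complex_inner \<Rightarrow> 'a"
  assumes "a \<in> joint_rank_k_numrange A n"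
  obtains V B where "cv.subspace V" "B \<subseteq> V" "cv.independent B" "finite B" "card B = n"
    "\<And>v w j. v \<in> V \<Longrightarrow> w \<in> V \<Longrightarrow> cinner v (A j w) = complex_of_real (a $ j) * cinner v w"
proof -
  obtain P where P: "orth_projection P" "has_rank P n"
    "\<And>j. P \<circ> A j \<circ> P = (\<lambda>x. complex_of_real (a $ j) *\<^sub>C P x)"
    using assms unfolding joint_rank_k_numrange_def by blast
  have lin: "clinear P" and sa: "\<And>x y. cinner (P x) y = cinner x (P y)" and idem: "P \<circ> P = P"
    using P(1) unfolding orth_projection_def selfadjoint_def bounded_operator_def by auto
  obtain B where B: "finite B" "card B = n" "cindependent B" "cspan B = range P"
    using P(2) unfolding has_rank_def by blast
  have fixes_range: "P v = v" if "v \<in> range P" for v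
    using that fun_cong[OF idem] by auto
  show ?thesis
  proof
    show "cv.subspace (range P)" by (rule subspace_range_clinear[OF lin])
    show "B \<subseteq> range P" using B(4) cv.span_superset[of B] by (simp add: cspan_eq_span)
    show "cv.independent B" using B(3) by (simp add: cindependent_eq_independent)
    show "finite B" "card B = n" using B by auto
    fix v w j assume "v \<in> range P" "w \<in> range P"
    then have "cinner v (A j w) = cinner v (P (A j (P w)))"
      using fixes_range sa by metis
    then show "cinner v (A j w) = complex_of_real (a $ j) * cinner v w"
      using fun_cong[OF P(3)[of j], of w] fixes_range[OF \<open>w \<in> range P\<close>]
      by (simp add: cinner_scaleC_right)
  qed
qed

section \<open>Orthonormal frames avoiding finitely many directions\<close>

definition orthogonal_compl :: "'a::complex_inner set \<Rightarrow> 'a set" where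
  "orthogonal_compl Y = {v. \<forall>y\<in>Y. cinner y v = 0}"

lemma orthogonal_compl_empty [simp]: "orthogonal_compl {} = UNIV"
  by (simp add: orthogonal_compl_def)

lemma subspace_Int_orthogonal_compl:
  "cv.subspace V \<Longrightarrow> cv.subspace (V \<inter> orthogonal_compl Y)"
  unfolding cv.subspace_def orthogonal_compl_def
  by (auto simp: cinner_add_right cinner_scaleC_right)

text \<open>Each vector of \<open>Y\<close> cuts down the dimension by at most one.\<close>

lemma span_Int_orthogonal_compl:
  fixes V :: "'a::complex_inner set"
  assumes V: "cv.subspace V" and "finite Y"
  obtains Z where "finite Z" "card Z \<le> card Y" "V \<subseteq> cv.span (V \<inter> orthogonal_compl Y \<union> Z)"
  using \<open>finite Y\<close>
proof (induct Y arbitrary: thesis rule: finite_induct)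
  case empty
  show ?case by (rule empty[of "{}"]) (auto intro: cv.span_base)
next
  case (insert y Y)
  let ?V0 = "V \<inter> orthogonal_compl Y" and ?V1 = "V \<inter> orthogonal_compl (insert y Y)"
  obtain Z where Z: "finite Z" "card Z \<le> card Y" "V \<subseteq> cv.span (?V0 \<union> Z)"
    using insert(3) by blast
  have V1: "?V1 = {v \<in> ?V0. cinner y v = 0}" unfolding orthogonal_compl_def by auto
  show ?case
  proof (cases "\<exists>v0\<in>?V0. cinner y v0 \<noteq> 0")
    case True
    then obtain v0 where v0: "v0 \<in> ?V0" "cinner y v0 \<noteq> 0" by blast
    have "v \<in> cv.span (?V1 \<union> insert v0 Z)" if v: "v \<in> ?V0" for v
    proof -
      define c where "c = cinner y v / cinner y v0"
      have "v - c *\<^sub>C v0 \<in> ?V0"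
        using subspace_Int_orthogonal_compl[OF V] v v0(1) by (intro cv.subspace_diff cv.subspace_scale)
      moreover have "cinner y (v - c *\<^sub>C v0) = 0"
        unfolding cinner_diff_right cinner_scaleC_right c_def using v0(2) by simp
      ultimately have "v - c *\<^sub>C v0 \<in> ?V1" unfolding V1 by simp
      then have "(v - c *\<^sub>C v0) + c *\<^sub>C v0 \<in> cv.span (?V1 \<union> insert v0 Z)"
        by (intro cv.span_add cv.span_scale) (auto intro: cv.span_base)
      then show ?thesis by simp
    qed
    then have "cv.span (?V0 \<union> Z) \<subseteq> cv.span (?V1 \<union> insert v0 Z)"
      by (intro cv.span_minimal) (auto intro: cv.span_base)
    then show ?thesis
      using Z insert(1,2) by (intro insert(4)[of "insert v0 Z"]) (auto simp: card_insert_if)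
  next
    case False
    then have "?V1 = ?V0" unfolding V1 by auto
    then show ?thesis using Z insert(1,2) by (intro insert(4)[of Z]) auto
  qed
qed

lemma orthonormal_extend:
  fixes x :: "nat \<Rightarrow> 'a::complex_inner"
  assumes x: "orthonormal x r" and V: "cv.subspace V" and xV: "\<forall>i<r. x i \<in> V"
    and v: "v \<in> V" "v \<notin> cv.span (x ` {..<r})"
  obtains e where "orthonormal (x(r := e)) (Suc r)" "e \<in> V"
proof -
  define w where "w = v - orthonormal_proj x r v"
  have "orthonormal_proj x r v \<in> cv.span (x ` {..<r})"
    using range_orthonormal_proj[OF x] by blast
  then have "w \<noteq> 0" using v(2) by (auto simp: w_def)
  have "orthonormal_proj x r v \<in> V"
    unfolding orthonormal_proj_def using xV by (auto intro!: cv.subspace_sum cv.subspace_scale V)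
  then have "w \<in> V" unfolding w_def by (rule cv.subspace_diff[OF V v(1)])
  define e where "e = complex_of_real (1 / norm w) *\<^sub>C w"
  have "norm e = 1" unfolding e_def norm_scaleC using \<open>w \<noteq> 0\<close> by (simp add: norm_divide)
  then have ee: "cinner e e = 1" by (simp add: cinner_self_eq_norm_square)
  have xe: "cinner (x l) e = 0" and ex: "cinner e (x l) = 0" if "l < r" for l
    using cinner_orthonormal_proj[OF x that, of v] cinner_commute[of e "x l"]
    by (simp_all add: e_def w_def cinner_scaleC_right cinner_diff_right)
  have "orthonormal (x(r := e)) (Suc r)"
    unfolding orthonormal_def
  proof (intro allI impI)
    fix i l assume "i < Suc r" "l < Suc r"
    then consider "i = r" "l = r" | "i = r" "l < r" | "i < r" "l = r" | "i < r" "l < r"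
      by linarith
    then show "cinner ((x(r := e)) i) ((x(r := e)) l) = (if i = l then 1 else 0)"
      by cases (use x ee xe ex in \<open>auto simp: orthonormal_def\<close>)
  qed
  moreover have "e \<in> V" unfolding e_def by (rule cv.subspace_scale[OF V \<open>w \<in> V\<close>])
  ultimately show ?thesis by (rule that)
qed

lemma orthonormal_in_orthogonal_compl:
  fixes V :: "'a::complex_inner set"
  assumes V: "cv.subspace V" and B: "B \<subseteq> V" "cv.independent B" "finite B"
    and Y: "finite Y" and dim: "k + card Y \<le> card B"
  obtains x where "orthonormal x k" "\<And>i. i < k \<Longrightarrow> x i \<in> V \<inter> orthogonal_compl Y"
proof -
  let ?V1 = "V \<inter> orthogonal_compl Y"
  have V1: "cv.subspace ?V1" by (rule subspace_Int_orthogonal_compl[OF V])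
  obtain Z where Z: "finite Z" "card Z \<le> card Y" "V \<subseteq> cv.span (?V1 \<union> Z)"
    using span_Int_orthogonal_compl[OF V Y] by blast
  have "\<exists>x. orthonormal x r \<and> (\<forall>i<r. x i \<in> ?V1)" if "r \<le> k" for r
    using that
  proof (induct r)
    case 0
    show ?case by (simp add: orthonormal_def)
  next
    case (Suc r)
    then obtain x where x: "orthonormal x r" "\<forall>i<r. x i \<in> ?V1" by auto
    let ?X = "x ` {..<r}"
    have "\<exists>v\<in>?V1. v \<notin> cv.span ?X"
    proof (rule ccontr)
      assume "\<not> ?thesis"
      then have "?V1 \<union> Z \<subseteq> cv.span (?X \<union> Z)"
        using cv.span_mono[of ?X "?X \<union> Z"] cv.span_superset[of "?X \<union> Z"] by blast
      then have "cv.span (?V1 \<union> Z) \<subseteq> cv.span (?X \<union> Z)"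
        by (rule cv.span_minimal) simp
      then have "B \<subseteq> cv.span (?X \<union> Z)" using B(1) Z(3) by blast
      then have "card B \<le> card (?X \<union> Z)"
        using cv.independent_span_bound[of "?X \<union> Z" B] B(2) Z(1) by simp
      also have "\<dots> \<le> r + card Z"
        using card_Un_le[of ?X Z] card_image_le[of "{..<r}" x] by simp
      finally show False using Z(2) dim Suc(2) by simp
    qed
    then obtain v where "v \<in> ?V1" "v \<notin> cv.span ?X" by blast
    from orthonormal_extend[OF x(1) V1 x(2) this] obtain e
      where "orthonormal (x(r := e)) (Suc r)" "e \<in> ?V1" .
    moreover from this(2) x(2) have "\<forall>i<Suc r. (x(r := e)) i \<in> ?V1"
      by (simp add: less_Suc_eq)
    ultimately show ?case by blast
  qed
  then show ?thesis using that by blast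
qed

lemma joint_rank_k_numrange_orthonormalE:
  fixes A :: "'i::finite \<Rightarrow> 'a::complex_inner \<Rightarrow> 'a"
  assumes a: "a \<in> joint_rank_k_numrange A n" and "k \<le> n"
  obtains w where "orthonormal w k"
    "\<And>i l j. i < k \<Longrightarrow> l < k \<Longrightarrow> cinner (w i) (A j (w l)) = complex_of_real (a $ j) * cinner (w i) (w l)"
proof -
  obtain V B where VB: "cv.subspace V" "B \<subseteq> V" "cv.independent B" "finite B" "card B = n"
    "\<And>v w j. v \<in> V \<Longrightarrow> w \<in> V \<Longrightarrow> cinner v (A j w) = complex_of_real (a $ j) * cinner v w"
    using joint_rank_k_numrange_compressionE[OF a] by metis
  obtain w where "orthonormal w k" "\<And>i. i < k \<Longrightarrow> w i \<in> V"
    using orthonormal_in_orthogonal_compl[OF VB(1-4) finite.emptyI, of k] VB(5) \<open>k \<le> n\<close> by auto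
  with VB(6) show ?thesis using that by blast
qed

lemma joint_rank_k_numrange_mono:
  fixes A :: "'i::finite \<Rightarrow> 'a::complex_inner \<Rightarrow> 'a"
  assumes sa: "\<And>j. selfadjoint (A j)" and a: "a \<in> joint_rank_k_numrange A khat"
    and "k \<le> khat"
  shows "a \<in> joint_rank_k_numrange A k"
proof -
  obtain u where u: "orthonormal u k"
    "\<And>i l j. i < k \<Longrightarrow> l < k \<Longrightarrow> cinner (u i) (A j (u l)) = complex_of_real (a $ j) * cinner (u i) (u l)"
    using joint_rank_k_numrange_orthonormalE[OF a \<open>k \<le> khat\<close>] by blast
  show ?thesis
    using u unfolding orthonormal_def
    by (intro joint_rank_k_numrange_orthonormalI[OF selfadjoint_clinear[OF sa] u(1)]) auto
qed

lemma cinner_scaleC_add_scaleC: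
  fixes p q r s :: "'a::complex_inner"
  shows "cinner (\<alpha> *\<^sub>C p + \<beta> *\<^sub>C q) (\<alpha> *\<^sub>C r + \<beta> *\<^sub>C s) =
    cnj \<alpha> * \<alpha> * cinner p r + cnj \<alpha> * \<beta> * cinner p s + cnj \<beta> * \<alpha> * cinner q r
      + cnj \<beta> * \<beta> * cinner q s"
  by (simp add: cinner_add_left cinner_add_right cinner_scaleC_left cinner_scaleC_right
      algebra_simps)

lemma joint_rank_k_numrange_orthonormal_combine:
  fixes A :: "'i::finite \<Rightarrow> 'a::complex_inner \<Rightarrow> 'a"
  assumes sa: "\<And>j. selfadjoint (A j)"
    and u: "orthonormal u k"
    and Au: "\<And>i l j. i < k \<Longrightarrow> l < k \<Longrightarrow> cinner (u i) (A j (u l)) = complex_of_real (a $ j) * cinner (u i) (u l)"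
    and w: "orthonormal w k"
    and Aw: "\<And>i l j. i < k \<Longrightarrow> l < k \<Longrightarrow> cinner (w i) (A j (w l)) = complex_of_real (b $ j) * cinner (w i) (w l)"
    and wu: "\<And>i l. i < k \<Longrightarrow> l < k \<Longrightarrow> cinner (w i) (u l) = 0"
    and Awu: "\<And>i l j. i < k \<Longrightarrow> l < k \<Longrightarrow> cinner (A j (w i)) (u l) = 0"
    and t: "0 \<le> t" "t \<le> 1"
  shows "t *\<^sub>R a + (1 - t) *\<^sub>R b \<in> joint_rank_k_numrange A k"
proof -
  have lin: "\<And>j. clinear (A j)" using sa by (rule selfadjoint_clinear)
  have uw: "cinner (u i) (w l) = 0" and uAw: "cinner (u i) (A j (w l)) = 0"
    and wAu: "cinner (w l) (A j (u i)) = 0" if "i < k" "l < k" for i l j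
    using wu[OF that(2,1)] Awu[OF that(2,1)] cinner_commute[of "u i"]
      selfadjoint_cinner[OF sa, of j "w l" "u i"]
    by simp_all
  define \<alpha> where "\<alpha> = complex_of_real (sqrt t)"
  define \<beta> where "\<beta> = complex_of_real (sqrt (1 - t))"
  have \<alpha>\<beta>: "cnj \<alpha> * \<alpha> = complex_of_real t" "cnj \<beta> * \<beta> = complex_of_real (1 - t)"
    unfolding \<alpha>_def \<beta>_def using t by (simp_all flip: of_real_mult)
  define x where "x i = \<alpha> *\<^sub>C u i + \<beta> *\<^sub>C w i" for i
  have x: "orthonormal x k"
    unfolding orthonormal_def
  proof (intro allI impI)
    fix i l assume il: "i < k" "l < k"
    have "cinner (x i) (x l) = complex_of_real t * cinner (u i) (u l)
        + complex_of_real (1 - t) * cinner (w i) (w l)"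
      unfolding x_def cinner_scaleC_add_scaleC \<alpha>\<beta> uw[OF il] wu[OF il] by simp
    then show "cinner (x i) (x l) = (if i = l then 1 else 0)"
      using u w il unfolding orthonormal_def by (simp flip: distrib_right of_real_add)
  qed
  show ?thesis
  proof (rule joint_rank_k_numrange_orthonormalI[OF lin x])
    fix j i l assume il: "i < k" "l < k"
    have Ax: "A j (x l) = \<alpha> *\<^sub>C A j (u l) + \<beta> *\<^sub>C A j (w l)"
      unfolding x_def clinear_add[OF lin] clinear_scaleC[OF lin] ..
    have "cinner (x i) (A j (x l)) = complex_of_real t * cinner (u i) (A j (u l))
        + complex_of_real (1 - t) * cinner (w i) (A j (w l))"
      unfolding Ax unfolding x_def cinner_scaleC_add_scaleC \<alpha>\<beta> uAw[OF il] wAu[OF il(2,1)] by simp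
    then show "cinner (x i) (A j (x l)) =
        (if i = l then complex_of_real ((t *\<^sub>R a + (1 - t) *\<^sub>R b) $ j) else 0)"
      using Au[OF il] Aw[OF il] u w il unfolding orthonormal_def by simp
  qed
qed

lemma card_image_Un_UNION_image_le:
  fixes g :: "'i::finite \<Rightarrow> 'a \<Rightarrow> 'b"
  assumes "finite A"
  shows "card (f ` A \<union> (\<Union>j. g j ` A)) \<le> (CARD('i) + 1) * card A"
proof -
  have "card (\<Union>j. g j ` A) \<le> (\<Sum>j\<in>UNIV. card (g j ` A))"
    by (rule card_UN_le) simp
  also have "\<dots> \<le> (\<Sum>j\<in>(UNIV::'i set). card A)"
    by (intro sum_mono card_image_le assms)
  finally show ?thesis
    using card_Un_le[of "f ` A" "\<Union>j. g j ` A"] card_image_le[OF assms, of f] by simp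
qed

lemma joint_rank_k_numrange_segment:
  fixes A :: "'i::finite \<Rightarrow> 'a::complex_inner \<Rightarrow> 'a"
  assumes sa: "\<And>j. selfadjoint (A j)" and a: "a \<in> joint_rank_k_numrange A khat"
    and b: "b \<in> joint_rank_k_numrange A k" and khat: "(CARD('i) + 2) * k \<le> khat"
    and t: "0 \<le> t" "t \<le> 1"
  shows "t *\<^sub>R a + (1 - t) *\<^sub>R b \<in> joint_rank_k_numrange A k"
proof -
  obtain w where w: "orthonormal w k"
    "\<And>i l j. i < k \<Longrightarrow> l < k \<Longrightarrow> cinner (w i) (A j (w l)) = complex_of_real (b $ j) * cinner (w i) (w l)"
    using joint_rank_k_numrange_orthonormalE[OF b order_refl] by blast
  obtain V B where VB: "cv.subspace V" "B \<subseteq> V" "cv.independent B" "finite B" "card B = khat"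
    "\<And>v w j. v \<in> V \<Longrightarrow> w \<in> V \<Longrightarrow> cinner v (A j w) = complex_of_real (a $ j) * cinner v w"
    using joint_rank_k_numrange_compressionE[OF a] by metis
  define Y where "Y = w ` {..<k} \<union> (\<Union>j. (\<lambda>i. A j (w i)) ` {..<k})"
  have "finite Y" unfolding Y_def by simp
  have "k + card Y \<le> card B"
    using card_image_Un_UNION_image_le[of "{..<k}" w "\<lambda>j i. A j (w i)"] VB(5) khat
    unfolding Y_def by (simp add: algebra_simps)
  then obtain u where u: "orthonormal u k" "\<And>i. i < k \<Longrightarrow> u i \<in> V \<inter> orthogonal_compl Y"
    using orthonormal_in_orthogonal_compl[OF VB(1-4) \<open>finite Y\<close>] by blast
  have Au: "cinner (u i) (A j (u l)) = complex_of_real (a $ j) * cinner (u i) (u l)"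
    if "i < k" "l < k" for i l j
    using VB(6) u(2) that by blast
  have "w i \<in> Y" "A j (w i) \<in> Y" if "i < k" for i j
    unfolding Y_def using that by blast+
  then have wu: "cinner (w i) (u l) = 0" and Awu: "cinner (A j (w i)) (u l) = 0"
    if "i < k" "l < k" for i l j
    using u(2)[OF that(2)] that(1) unfolding orthogonal_compl_def by blast+
  show ?thesis
    by (rule joint_rank_k_numrange_orthonormal_combine[OF sa u(1) Au w wu Awu t])
qed

section \<open>Star centers\<close>

text \<open>Each point of the segment lies on a segment from \<open>c2\<close> to a point of \<open>[c1, b]\<close>.\<close>

lemma closed_segment_star_centers_combination_subset:
  fixes S :: "'v::real_vector set"
  assumes c1: "star_center c1 S" and c2: "star_center c2 S"
    and l: "0 \<le> l" "l \<le> 1" and b: "b \<in> S"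
  shows "closed_segment ((1 - l) *\<^sub>R c1 + l *\<^sub>R c2) b \<subseteq> S"
proof
  define c where "c = (1 - l) *\<^sub>R c1 + l *\<^sub>R c2"
  have c1S: "\<And>b. b \<in> S \<Longrightarrow> closed_segment c1 b \<subseteq> S"
    and c2S: "c2 \<in> S" "\<And>b. b \<in> S \<Longrightarrow> closed_segment c2 b \<subseteq> S"
    using c1 c2 unfolding star_center_def by auto
  fix p assume "p \<in> closed_segment c b"
  then obtain s where s: "0 \<le> s" "s \<le> 1" "p = (1 - s) *\<^sub>R c + s *\<^sub>R b"
    unfolding closed_segment_def by auto
  show "p \<in> S"
  proof (cases "s = 0")
    case True
    have "c \<in> closed_segment c1 c2" unfolding c_def closed_segment_def using l by blast
    then show ?thesis using True s c1S[OF c2S(1)] by auto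
  next
    case False
    define \<gamma> where "\<gamma> = 1 - (1 - s) * l"
    have "0 \<le> (1 - s) * l" using s(2) l(1) by simp
    moreover have "(1 - s) * l \<le> 1 - s" using l s(2) by (intro mult_left_le) auto
    ultimately have "s \<le> \<gamma>" "\<gamma> \<le> 1" unfolding \<gamma>_def by linarith+
    with False s have \<gamma>: "0 < \<gamma>" "0 \<le> s / \<gamma>" "s / \<gamma> \<le> 1" by auto
    define q where "q = ((1 - s) * (1 - l) / \<gamma>) *\<^sub>R c1 + (s / \<gamma>) *\<^sub>R b"
    have "(1 - s) * (1 - l) = \<gamma> - s" unfolding \<gamma>_def by (simp add: algebra_simps)
    then have "(1 - s) * (1 - l) / \<gamma> = 1 - s / \<gamma>" using \<gamma>(1) by (simp add: diff_divide_distrib)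
    then have "q \<in> closed_segment c1 b" unfolding q_def closed_segment_def using \<gamma> by auto
    then have qS: "q \<in> S" using c1S[OF b] by blast
    have "\<gamma> *\<^sub>R q = ((1 - s) * (1 - l)) *\<^sub>R c1 + s *\<^sub>R b"
      using \<gamma>(1) by (simp add: q_def scaleR_add_right)
    then have "(1 - \<gamma>) *\<^sub>R c2 + \<gamma> *\<^sub>R q = p"
      unfolding s(3) c_def \<gamma>_def by (simp add: algebra_simps)
    then have "p \<in> closed_segment c2 q"
      unfolding closed_segment_def using \<gamma> \<open>\<gamma> \<le> 1\<close> by (intro CollectI exI[of _ \<gamma>]) auto
    then show "p \<in> S" using c2S(2)[OF qS] by blast
  qed
qed

lemma convex_star_centers:
  fixes S :: "'v::real_vector set"
  shows "convex {c. star_center c S}"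
  unfolding convex_alt
proof (clarsimp)
  fix c1 c2 and l :: real
  assume c1: "star_center c1 S" and c2: "star_center c2 S" and l: "0 \<le> l" "l \<le> 1"
  have "(1 - l) *\<^sub>R c1 + l *\<^sub>R c2 \<in> closed_segment c1 c2"
    unfolding closed_segment_def using l by blast
  then have "(1 - l) *\<^sub>R c1 + l *\<^sub>R c2 \<in> S"
    using c1 c2 unfolding star_center_def by blast
  then show "star_center ((1 - l) *\<^sub>R c1 + l *\<^sub>R c2) S"
    unfolding star_center_def
    using closed_segment_star_centers_combination_subset[OF c1 c2 l] by blast
qed

lemma starlike_if_star_center: "star_center c S \<Longrightarrow> starlike S"
  unfolding starlike_def star_center_def by blast

theorem theorem3p1:
  fixes A :: "'i::finite \<Rightarrow> 'h::chilbert_space \<Rightarrow> 'h"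
    and k khat :: nat
  assumes "\<And>j. selfadjoint (A j)"
    and "k > 0"
    and "khat \<ge> (CARD('i) + 2) * k"
    and "joint_rank_k_numrange A khat \<noteq> {}"
  shows "starlike (joint_rank_k_numrange A k)
     \<and> convex hull (joint_rank_k_numrange A khat) \<subseteq> joint_rank_k_numrange A k
     \<and> (\<forall>c \<in> convex hull (joint_rank_k_numrange A khat). star_center c (joint_rank_k_numrange A k))"
proof -
  let ?L = "joint_rank_k_numrange A k" and ?H = "joint_rank_k_numrange A khat"
  have "k \<le> khat" using assms(3) by (simp add: algebra_simps)
  have "star_center a ?L" if a: "a \<in> ?H" for a
    unfolding star_center_def
  proof (intro conjI ballI subsetI)
    show "a \<in> ?L" using joint_rank_k_numrange_mono[OF assms(1) a \<open>k \<le> khat\<close>] .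
    fix b p assume b: "b \<in> ?L" and "p \<in> closed_segment a b"
    then obtain u where "0 \<le> u" "u \<le> 1" "p = (1 - u) *\<^sub>R a + u *\<^sub>R b"
      unfolding closed_segment_def by blast
    then show "p \<in> ?L"
      using joint_rank_k_numrange_segment[OF assms(1) a b assms(3), of "1 - u"] by simp
  qed
  then have centers: "convex hull ?H \<subseteq> {c. star_center c ?L}"
    by (intro hull_minimal convex_star_centers) auto
  moreover from centers have "convex hull ?H \<subseteq> ?L"
    unfolding star_center_def by blast
  moreover obtain a where "a \<in> ?H" using assms(4) by blast
  then have "star_center a ?L" using subsetD[OF centers hull_inc] by simp
  then have "starlike ?L" by (rule starlike_if_star_center)
  ultimately show ?thesis by blast
qed

end
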